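(* Let $(X,P,o)$ be a generalized parametric metric space such that $P$ satisfies (P5) and $o$ is continuous. Then $(X,\tau_P)$ is first countable; more precisely, for each $x\in X$ the family $\{B(x,\tfrac1n,\tfrac1n): n\in\mathbb{N}\}$ is a local base at $x$.
   Context: A binary operation $o:[0,\infty)\times[0,\infty)\to[0,\infty)$ (written $\alpha\, o\, \beta$) is assumed to satisfy, for all $\alpha,\beta,\gamma\in[0,\infty)$: (a) $\alpha\, o\, 0=\alpha$; (b) $\alpha\le\beta\implies \alpha\, o\,\gamma\le\beta\, o\,\gamma$; (c) $\alpha\, o\,\gamma=\gamma\, o\,\alpha$; (d) $\alpha\, o\,(\beta\, o\,\gamma)=(\alpha\, o\,\beta)\, o\,\gamma$. It is continuous if whenever $\alpha_n\to\alpha$ and $\beta_n\to\beta$ in $[0,\infty)$ we have $\alpha_n\, o\,\beta_n\to\alpha\, o\,\beta$. A generalized parametric metric on a nonempty set $X$ is a function $P:X\times X\times(0,\infty)\to[0,\infty)$ such that: (P1) $P(a,b,t)=0$ for all $t>0$ if and only if $a=b$; (P2) $P(a,b,t)=P(b,a,t)$ for all $a,b\in X$, $t>0$; (P3) $P(a,b,s+t)\le P(a,x,s)\, o\, P(b,x,t)$ for all $s,t>0$ and $a,b,x\in X$. The triple $(X,P,o)$ is a generalized parametric metric space. Condition (P5): for all $a,b\in X$, the map $t\mapsto P(a,b,t)$ is continuous on $(0,\infty)$. Open ball: $B(a,\alpha,t)=\{b\in X: P(a,b,t)<\alpha\}$. $\tau_P$ is the topology consisting of all $A\subseteq X$ such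 that for every $a\in A$ there exist $\alpha>0,t>0$ with $B(a,\alpha,t)\subseteq A$. *)

theory Defs
  imports "HOL-Analysis.Analysis"
begin

definition is_op :: "(real \<Rightarrow> real \<Rightarrow> real) \<Rightarrow> bool" where
  "is_op opr \<longleftrightarrow>
     (\<forall>\<alpha>\<ge>0. \<forall>\<beta>\<ge>0. opr \<alpha> \<beta> \<ge> 0) \<and>
     (\<forall>\<alpha>\<ge>0. opr \<alpha> 0 = \<alpha>) \<and>
     (\<forall>\<alpha>\<ge>0. \<forall>\<beta>\<ge>0. \<forall>\<gamma>\<ge>0. \<alpha> \<le> \<beta> \<longrightarrow> opr \<alpha> \<gamma> \<le> opr \<beta> \<gamma>) \<and>
     (\<forall>\<alpha>\<ge>0. \<forall>\<gamma>\<ge>0. opr \<alpha> \<gamma> = opr \<gamma> \<alpha>) \<and>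
     (\<forall>\<alpha>\<ge>0. \<forall>\<beta>\<ge>0. \<forall>\<gamma>\<ge>0. opr \<alpha> (opr \<beta> \<gamma>) = opr (opr \<alpha> \<beta>) \<gamma>)"

definition op_continuous :: "(real \<Rightarrow> real \<Rightarrow> real) \<Rightarrow> bool" where
  "op_continuous opr \<longleftrightarrow>
     (\<forall>a b (\<alpha>::real) (\<beta>::real). (\<forall>n. a n \<ge> 0 \<and> b n \<ge> 0) \<and> \<alpha> \<ge> 0 \<and> \<beta> \<ge> 0 \<and>
        a \<longlonglongrightarrow> \<alpha> \<and> b \<longlonglongrightarrow> \<beta> \<longrightarrow> (\<lambda>n. opr (a n) (b n)) \<longlonglongrightarrow> opr \<alpha> \<beta>)"

text \<open>Generalized parametric metric on the whole type 'a (the nonempty set X).\<close>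
definition gen_param_metric :: "('a \<Rightarrow> 'a \<Rightarrow> real \<Rightarrow> real) \<Rightarrow> (real \<Rightarrow> real \<Rightarrow> real) \<Rightarrow> bool" where
  "gen_param_metric P opr \<longleftrightarrow>
     (\<forall>a b t. t > 0 \<longrightarrow> P a b t \<ge> 0) \<and>
     (\<forall>a b. (\<forall>t>0. P a b t = 0) \<longleftrightarrow> a = b) \<and>
     (\<forall>a b t. t > 0 \<longrightarrow> P a b t = P b a t) \<and>
     (\<forall>a b x s t. s > 0 \<and> t > 0 \<longrightarrow> P a b (s + t) \<le> opr (P a x s) (P b x t))"

definition P5 :: "('a \<Rightarrow> 'a \<Rightarrow> real \<Rightarrow> real) \<Rightarrow> bool" where
  "P5 P \<longleftrightarrow> (\<forall>a b. continuous_on {0<..} (P a b))"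

definition Pball :: "('a \<Rightarrow> 'a \<Rightarrow> real \<Rightarrow> real) \<Rightarrow> 'a \<Rightarrow> real \<Rightarrow> real \<Rightarrow> 'a set" where
  "Pball P a \<alpha> t = {b. P a b t < \<alpha>}"

definition tauP :: "('a \<Rightarrow> 'a \<Rightarrow> real \<Rightarrow> real) \<Rightarrow> 'a set set" where
  "tauP P = {A. \<forall>a\<in>A. \<exists>\<alpha>>0. \<exists>t>0. Pball P a \<alpha> t \<subseteq> A}"

definition first_countable_tau :: "'a set set \<Rightarrow> bool" where
  "first_countable_tau T \<longleftrightarrow>
     (\<forall>x. \<exists>\<B>. countable \<B> \<and> \<B> \<subseteq> T \<and>
        (\<forall>U\<in>T. x \<in> U \<longrightarrow> (\<exists>V\<in>\<B>. x \<in> V \<and> V \<subseteq> U)))"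

end

theory Submission
  imports Defs
begin

text \<open>The balls \<open>B(x, 1/n, 1/n)\<close> are open because every ball is: given \<open>P(x,b,t) < e\<close>,
  left continuity in the parameter (P5) yields \<open>s < t\<close> with \<open>P(x,b,s) < e\<close>, and continuity of
  \<open>o\<close> at \<open>(P(x,b,s), 0)\<close> yields \<open>\<delta>\<close> with \<open>P(x,b,s) o \<delta> < e\<close>; the triangle inequality (P3)
  then places \<open>B(b,\<delta>,t-s)\<close> inside \<open>B(x,e,t)\<close>. They form a local base because \<open>P(x,b,t)\<close> is
  antitone in \<open>t\<close> (apply (P3) with the middle point \<open>b\<close>), so that \<open>B(x,1/n,1/n) \<subseteq> B(x,\<alpha>,t)\<close>
  as soon as \<open>1/n \<le> min \<alpha> t\<close>.\<close>

lemma is_op_right_zero: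
  assumes "is_op opr" "0 \<le> a" shows "opr a 0 = a"
proof -
  have "\<forall>\<alpha>\<ge>0. opr \<alpha> 0 = \<alpha>"
    using assms(1) unfolding is_op_def by (elim conjE)
  then show ?thesis using assms(2) by blast
qed

lemma is_op_mono_left:
  "is_op opr \<Longrightarrow> 0 \<le> a \<Longrightarrow> a \<le> b \<Longrightarrow> 0 \<le> c \<Longrightarrow> opr a c \<le> opr b c"
  by (simp add: is_op_def)

lemma is_op_commute: "is_op opr \<Longrightarrow> 0 \<le> a \<Longrightarrow> 0 \<le> b \<Longrightarrow> opr a b = opr b a"
  unfolding is_op_def by blast

lemma gen_param_metric_nonneg: "gen_param_metric P opr \<Longrightarrow> 0 < t \<Longrightarrow> 0 \<le> P a b t"
  by (simp add: gen_param_metric_def)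

lemma gen_param_metric_self:
  assumes "gen_param_metric P opr" "0 < t" shows "P a a t = 0"
proof -
  have "\<forall>a b. (\<forall>t>0. P a b t = 0) \<longleftrightarrow> a = b"
    using assms(1) unfolding gen_param_metric_def by (elim conjE)
  then show ?thesis using assms(2) by blast
qed

lemma gen_param_metric_commute: "gen_param_metric P opr \<Longrightarrow> 0 < t \<Longrightarrow> P a b t = P b a t"
  by (simp add: gen_param_metric_def)

lemma gen_param_metric_triangle:
  "gen_param_metric P opr \<Longrightarrow> 0 < s \<Longrightarrow> 0 < t \<Longrightarrow> P a b (s + t) \<le> opr (P a x s) (P b x t)"
  by (simp add: gen_param_metric_def)

lemma gen_param_metric_antimono:
  assumes op: "is_op opr" and P: "gen_param_metric P opr" and "0 < s" "s \<le> t"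
  shows "P a b t \<le> P a b s"
proof (cases "s = t")
  case False
  then have "0 < t - s" using \<open>s \<le> t\<close> by simp
  have "P a b (s + (t - s)) \<le> opr (P a b s) (P b b (t - s))"
    using gen_param_metric_triangle[OF P \<open>0 < s\<close> \<open>0 < t - s\<close>] .
  also have "\<dots> = P a b s"
    using gen_param_metric_self[OF P \<open>0 < t - s\<close>] gen_param_metric_nonneg[OF P \<open>0 < s\<close>]
    by (simp add: is_op_right_zero[OF op])
  finally show ?thesis by simp
qed simp

lemma centre_in_Pball: "gen_param_metric P opr \<Longrightarrow> 0 < t \<Longrightarrow> 0 < \<alpha> \<Longrightarrow> x \<in> Pball P x \<alpha> t"
  by (simp add: Pball_def gen_param_metric_self)

lemma Pball_mono:
  assumes "is_op opr" "gen_param_metric P opr" "\<alpha> \<le> \<beta>" "0 < s" "s \<le> t"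
  shows "Pball P x \<alpha> s \<subseteq> Pball P x \<beta> t"
  using gen_param_metric_antimono[OF assms(1,2,4,5)] assms(3)
  unfolding Pball_def by (fastforce intro: le_less_trans)

lemma op_continuous_right_small:
  assumes op: "is_op opr" and "op_continuous opr" and "0 \<le> \<beta>" "\<beta> < e"
  shows "\<exists>\<delta>>0. opr \<beta> \<delta> < e"
proof -
  have "(\<lambda>n. opr \<beta> (inverse (real (Suc n)))) \<longlonglongrightarrow> opr \<beta> 0"
    using assms(2,3) LIMSEQ_inverse_real_of_nat unfolding op_continuous_def by auto
  then have "eventually (\<lambda>n. opr \<beta> (inverse (real (Suc n))) < e) sequentially"
    using \<open>\<beta> < e\<close> by (simp add: order_tendstoD(2) is_op_right_zero[OF op \<open>0 \<le> \<beta>\<close>])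
  then obtain N where N: "\<forall>n\<ge>N. opr \<beta> (inverse (real (Suc n))) < e"
    unfolding eventually_sequentially ..
  show ?thesis
  proof (intro exI conjI)
    show "0 < inverse (real (Suc N))"
      by simp
    show "opr \<beta> (inverse (real (Suc N))) < e"
      using N by simp
  qed
qed

lemma P5_left_continuous:
  assumes "P5 P" "0 < t" "P a b t < e"
  shows "\<exists>s>0. s < t \<and> P a b s < e"
proof -
  have "isCont (P a b) t"
    using assms(1,2) unfolding P5_def by (simp add: continuous_on_eq_continuous_at)
  then have "(P a b \<longlongrightarrow> P a b t) (at_left t)"
    by (simp add: isCont_def filterlim_at_split)
  then have "eventually (\<lambda>s. P a b s < e) (at_left t)"
    using assms(3) by (rule order_tendstoD(2))
  moreover have "eventually (\<lambda>s. s \<in> {0<..<t}) (at_left t)"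
    using eventually_at_left_real[OF \<open>0 < t\<close>] .
  ultimately have "eventually (\<lambda>s. 0 < s \<and> s < t \<and> P a b s < e) (at_left t)"
    by eventually_elim auto
  then show ?thesis using eventually_happens[of _ "at_left t"] by auto
qed

lemma Pball_triangle_subset:
  assumes op: "is_op opr" and P: "gen_param_metric P opr"
    and "0 < s" "0 < r" "0 < \<delta>" "opr (P x b s) \<delta> < e"
  shows "Pball P b \<delta> r \<subseteq> Pball P x e (s + r)"
proof
  fix c assume "c \<in> Pball P b \<delta> r"
  then have "P c b r \<le> \<delta>"
    using gen_param_metric_commute[OF P \<open>0 < r\<close>] by (simp add: Pball_def)
  have nonneg: "0 \<le> P x b s" "0 \<le> P c b r"
    using gen_param_metric_nonneg[OF P] \<open>0 < s\<close> \<open>0 < r\<close> by auto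
  have "P x c (s + r) \<le> opr (P x b s) (P c b r)"
    using gen_param_metric_triangle[OF P \<open>0 < s\<close> \<open>0 < r\<close>] .
  also have "\<dots> = opr (P c b r) (P x b s)"
    using is_op_commute[OF op] nonneg by simp
  also have "\<dots> \<le> opr \<delta> (P x b s)"
    using is_op_mono_left[OF op] nonneg \<open>P c b r \<le> \<delta>\<close> by simp
  also have "\<dots> = opr (P x b s) \<delta>"
    using is_op_commute[OF op] nonneg \<open>0 < \<delta>\<close> by simp
  finally show "c \<in> Pball P x e (s + r)"
    using \<open>opr (P x b s) \<delta> < e\<close> by (simp add: Pball_def)
qed

lemma Pball_in_tauP:
  assumes op: "is_op opr" and "op_continuous opr" and P: "gen_param_metric P opr"
    and "P5 P" "0 < t"
  shows "Pball P x e t \<in> tauP P"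
  unfolding tauP_def
proof (intro CollectI ballI)
  fix b assume "b \<in> Pball P x e t"
  then obtain s where s: "0 < s" "s < t" "P x b s < e"
    using P5_left_continuous[OF \<open>P5 P\<close> \<open>0 < t\<close>, of x b e] by (auto simp: Pball_def)
  obtain \<delta> where "0 < \<delta>" "opr (P x b s) \<delta> < e"
    using op_continuous_right_small[OF op \<open>op_continuous opr\<close> gen_param_metric_nonneg[OF P s(1)] s(3)]
    by blast
  then have "Pball P b \<delta> (t - s) \<subseteq> Pball P x e t"
    using Pball_triangle_subset[OF op P \<open>0 < s\<close>, of "t - s"] s(2) by simp
  moreover have "0 < t - s"
    using s(2) by simp
  ultimately show "\<exists>\<alpha>>0. \<exists>r>0. Pball P b \<alpha> r \<subseteq> Pball P x e t"
    using \<open>0 < \<delta>\<close> by (intro exI[of _ \<delta>] exI[of _ "t - s"] conjI)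
qed

lemma tauP_local_base:
  assumes op: "is_op opr" and P: "gen_param_metric P opr" and "U \<in> tauP P" "x \<in> U"
  shows "\<exists>n::nat. n \<ge> 1 \<and> Pball P x (1 / real n) (1 / real n) \<subseteq> U"
proof -
  obtain \<alpha> t where "0 < \<alpha>" "0 < t" "Pball P x \<alpha> t \<subseteq> U"
    using assms(3,4) unfolding tauP_def by blast
  then obtain n :: nat where n: "inverse (real (Suc n)) < min \<alpha> t"
    using reals_Archimedean by (metis min_less_iff_conj)
  then have "Pball P x (1 / real (Suc n)) (1 / real (Suc n)) \<subseteq> Pball P x \<alpha> t"
    by (intro Pball_mono[OF op P]) (auto simp: inverse_eq_divide)
  then show ?thesis
    using \<open>Pball P x \<alpha> t \<subseteq> U\<close> by (intro exI[of _ "Suc n"]) auto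
qed

lemma first_countable_tauI:
  assumes "countable I"
    and "\<And>x i. i \<in> I \<Longrightarrow> B x i \<in> T \<and> x \<in> B x i"
    and "\<And>x U. U \<in> T \<Longrightarrow> x \<in> U \<Longrightarrow> \<exists>i\<in>I. B x i \<subseteq> U"
  shows "first_countable_tau T"
  unfolding first_countable_tau_def
proof
  fix x
  show "\<exists>\<B>. countable \<B> \<and> \<B> \<subseteq> T \<and> (\<forall>U\<in>T. x \<in> U \<longrightarrow> (\<exists>V\<in>\<B>. x \<in> V \<and> V \<subseteq> U))"
  proof (intro exI[of _ "B x ` I"] conjI ballI impI)
    show "countable (B x ` I)"
      using assms(1) by simp
    show "B x ` I \<subseteq> T"
      using assms(2) by auto
    fix U assume U: "U \<in> T" "x \<in> U"
    then obtain i where "i \<in> I" "B x i \<subseteq> U"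
      using assms(3)[OF U] by blast
    then show "\<exists>V\<in>B x ` I. x \<in> V \<and> V \<subseteq> U"
      using assms(2)[of i x] by blast
  qed
qed

theorem mainTheorem12:
  fixes P :: "'a \<Rightarrow> 'a \<Rightarrow> real \<Rightarrow> real" and opr :: "real \<Rightarrow> real \<Rightarrow> real"
  assumes "is_op opr" and "op_continuous opr"
    and "gen_param_metric P opr" and "P5 P"
  shows "first_countable_tau (tauP P) \<and>
    (\<forall>x. (\<forall>n::nat. n \<ge> 1 \<longrightarrow>
            Pball P x (1 / real n) (1 / real n) \<in> tauP P \<and> x \<in> Pball P x (1 / real n) (1 / real n)) \<and>
         (\<forall>U\<in>tauP P. x \<in> U \<longrightarrow>
            (\<exists>n::nat. n \<ge> 1 \<and> Pball P x (1 / real n) (1 / real n) \<subseteq> U)))"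
proof -
  let ?B = "\<lambda>x n. Pball P x (1 / real n) (1 / real n)"
  have open_ball: "?B x n \<in> tauP P \<and> x \<in> ?B x n" if "n \<ge> 1" for x n
    using Pball_in_tauP[OF assms] centre_in_Pball[OF assms(3)] that by simp
  have base: "\<exists>n::nat. n \<ge> 1 \<and> ?B x n \<subseteq> U" if "U \<in> tauP P" "x \<in> U" for x U
    using tauP_local_base[OF assms(1,3) that] .
  have "first_countable_tau (tauP P)"
  proof (rule first_countable_tauI[of "{1..}" ?B])
    fix x U assume "U \<in> tauP P" "x \<in> U"
    then show "\<exists>n\<in>{1..}. ?B x n \<subseteq> U"
      using base[of U x] by auto
  qed (simp_all add: open_ball)
  then show ?thesis
    using open_ball base by simp
qed

end
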